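(* Let $F:\mathbb{R}\to\mathbb{R}$, $b\in\mathbb{R}$ and $\gamma>0$ satisfy A1 and A2, with $\nu,\omega^{(0)},\Lambda_j,V$ as in the context. Then $\Lambda_j\in\mathbb{R}\setminus\{0\}$ for $1\le j\le\nu$; $V(\omega^{(0)})(e_j+e_l)\in\mathbb{R}\setminus\{0\}$ for $1\le j,l\le\nu$; and $V(\omega^{(0)})(e_j-e_l)\in\mathbb{R}\setminus\{0\}$ for $1\le j\ne l\le\nu$.
   Context: A1: $F$ is real analytic in a neighborhood of $-b$ with $F'(-b)>0$. A2: $0<\gamma<\sqrt{F'(-b)}$ and $2\sqrt{F'(-b)}\notin\gamma\mathbb{Z}$. $\nu$ is the integer with $\nu\gamma<2\sqrt{F'(-b)}<(\nu+1)\gamma$; $\omega^{(0)}_j=2\arcsin(j\gamma/(2\sqrt{F'(-b)}))$, $\omega^{(0)}=(\omega^{(0)}_1,\dots,\omega^{(0)}_\nu)$; $g=(1,\dots,\nu)$; $e_j$ the $j$-th unit vector in $\mathbb{Z}^\nu$; $\Lambda_j=\frac{(j\gamma)^2\cos(\omega^{(0)}_j/2)}{4\sin^3(\omega^{(0)}_j/2)}$; for $m\in\mathbb{Z}^\nu$, $V(\omega)(m)=F'(-b)$ if $\langle g,m\rangle=0$ and $V(\omega)(m)=F'(-b)-\frac{\langle g,m\rangle^2\gamma^2}{4\sin^2(\langle\omega,m\rangle/2)}$ otherwise (with value $\infty$ if $\langle g,m\rangle\ne0$ and $\langle\omega,m\rangle\in2\pi\mathbb{Z}$). *)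

theory Defs
  imports "HOL-Analysis.Analysis"
begin

definition real_analytic_at :: "(real \<Rightarrow> real) \<Rightarrow> real \<Rightarrow> bool" where
  "real_analytic_at F x0 \<longleftrightarrow>
     (\<exists>\<delta>>0. \<exists>c :: nat \<Rightarrow> real. \<forall>x. \<bar>x - x0\<bar> < \<delta> \<longrightarrow> (\<lambda>n. c n * (x - x0) ^ n) sums F x)"

text \<open>Vectors in Z^nu / R^nu are functions on nat, only the indices 1..nu matter.\<close>
definition ipZ :: "nat \<Rightarrow> (nat \<Rightarrow> real) \<Rightarrow> (nat \<Rightarrow> int) \<Rightarrow> real" where
  "ipZ \<nu> w m = (\<Sum>k=1..\<nu>. w k * real_of_int (m k))"

definition gvec :: "nat \<Rightarrow> real" where "gvec k = real k"

definition unitv :: "nat \<Rightarrow> nat \<Rightarrow> int" where "unitv j = (\<lambda>k. if k = j then 1 else 0)"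

definition omega0 :: "real \<Rightarrow> real \<Rightarrow> nat \<Rightarrow> real" where
  "omega0 Fp \<gamma> j = 2 * arcsin (real j * \<gamma> / (2 * sqrt Fp))"

definition Lambda :: "real \<Rightarrow> real \<Rightarrow> nat \<Rightarrow> real" where
  "Lambda Fp \<gamma> j = (real j * \<gamma>)\<^sup>2 * cos (omega0 Fp \<gamma> j / 2) / (4 * (sin (omega0 Fp \<gamma> j / 2)) ^ 3)"

text \<open>V(omega)(m), with value infinity in the singular case; Fp stands for F'(-b).\<close>
definition Vfun :: "real \<Rightarrow> real \<Rightarrow> nat \<Rightarrow> (nat \<Rightarrow> real) \<Rightarrow> (nat \<Rightarrow> int) \<Rightarrow> ereal" where
  "Vfun Fp \<gamma> \<nu> w m =
     (if ipZ \<nu> gvec m = 0 then ereal Fp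
      else if (\<exists>k::int. ipZ \<nu> w m = 2 * pi * real_of_int k) then PInfty
      else ereal (Fp - (ipZ \<nu> gvec m)\<^sup>2 * \<gamma>\<^sup>2 / (4 * (sin (ipZ \<nu> w m / 2))\<^sup>2)))"

end

theory Submission
  imports Defs
begin

text \<open>Write \<open>a\<^sub>j = \<omega>\<^sub>j/2 = arcsin x\<^sub>j\<close> with \<open>x\<^sub>j = j\<gamma>/(2\<surd>F'(-b)) \<in> (0,1)\<close>, so
  \<open>a\<^sub>j \<in> (0,\<pi>/2)\<close> and \<open>\<Lambda>\<^sub>j > 0\<close>. Off the resonance \<open>sin(a\<^sub>j \<plusminus> a\<^sub>l) = 0\<close> one has
  \<open>V(\<omega>\<^sup>0)(e\<^sub>j \<plusminus> e\<^sub>l) = F'(-b) (1 - (sin a\<^sub>j \<plusminus> sin a\<^sub>l)\<^sup>2 / sin\<^sup>2(a\<^sub>j \<plusminus> a\<^sub>l))\<close>, so it suffices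
  that \<open>|sin(a\<^sub>j \<plusminus> a\<^sub>l)|\<close> and \<open>|sin a\<^sub>j \<plusminus> sin a\<^sub>l|\<close> are distinct and the former is nonzero.
  By the sum-to-product formulas both quantities carry the common factor \<open>2 sin((a\<^sub>j \<plusminus> a\<^sub>l)/2)\<close>
  and differ only in the remaining factor, \<open>cos((a\<^sub>j + a\<^sub>l)/2)\<close> versus \<open>cos((a\<^sub>j - a\<^sub>l)/2)\<close>; these
  are distinct because cosine is strictly decreasing on \<open>[0,\<pi>]\<close>. Only \<open>F'(-b) > 0\<close>,
  \<open>\<gamma> > 0\<close> and \<open>\<nu>\<gamma> < 2\<surd>F'(-b)\<close> are used.\<close>

lemma cos_half_sum_less_cos_half_diff:
  fixes a b :: real
  assumes "0 < a" "0 < b" "a + b < pi"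
  shows "0 < cos ((a + b) / 2)" "cos ((a + b) / 2) < cos ((a - b) / 2)"
proof -
  show "0 < cos ((a + b) / 2)" using assms by (intro cos_gt_zero) auto
  have "cos ((a + b) / 2) < cos \<bar>(a - b) / 2\<bar>"
    using assms by (intro cos_monotone_0_pi) (auto simp: abs_le_iff)
  then show "cos ((a + b) / 2) < cos ((a - b) / 2)" by (simp only: cos_abs_real)
qed

lemma sin_double_half: "sin (x::real) = 2 * sin (x / 2) * cos (x / 2)"
  using sin_double[of "x / 2"] by simp

lemma sin_add_less_sin_plus_sin:
  fixes a b :: real
  assumes "0 < a" "0 < b" "a + b < pi"
  shows "0 < sin (a + b)" "sin (a + b) < sin a + sin b"
proof -
  show "0 < sin (a + b)" using assms by (intro sin_gt_zero) auto
  have s: "0 < sin ((a + b) / 2)" using assms by (intro sin_gt_zero) auto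
  have "sin (a + b) = 2 * sin ((a + b) / 2) * cos ((a + b) / 2)"
    by (rule sin_double_half)
  also have "\<dots> < 2 * sin ((a + b) / 2) * cos ((a - b) / 2)"
    using s cos_half_sum_less_cos_half_diff[OF assms] by simp
  also have "\<dots> = sin a + sin b" by (simp add: sin_plus_sin)
  finally show "sin (a + b) < sin a + sin b" .
qed

lemma abs_sin_minus_sin_less:
  fixes a b :: real
  assumes "0 < a" "0 < b" "a + b < pi" "a \<noteq> b"
  shows "\<bar>sin a - sin b\<bar> < \<bar>sin (a - b)\<bar>"
proof -
  have s: "sin ((a - b) / 2) \<noteq> 0"
  proof
    assume "sin ((a - b) / 2) = 0"
    then obtain i :: int where i: "(a - b) / 2 = of_int i * pi" by (auto simp: sin_zero_iff_int2)
    have "\<bar>of_int i * pi\<bar> < pi" using assms by (simp flip: i)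
    then have "i = 0" by (simp add: abs_mult)
    with i assms(4) show False by simp
  qed
  note c = cos_half_sum_less_cos_half_diff[OF assms(1-3)]
  have "\<bar>sin a - sin b\<bar> = 2 * \<bar>sin ((a - b) / 2)\<bar> * cos ((a + b) / 2)"
    using c(1) by (simp add: sin_diff_sin abs_mult)
  also have "\<dots> < 2 * \<bar>sin ((a - b) / 2)\<bar> * cos ((a - b) / 2)"
    using s c by simp
  also have "\<dots> = \<bar>sin (a - b)\<bar>"
    using c by (subst sin_double_half) (simp add: abs_mult)
  finally show ?thesis .
qed

lemma ipZ_add: "ipZ \<nu> w (\<lambda>k. m k + n k) = ipZ \<nu> w m + ipZ \<nu> w n"
  by (simp add: ipZ_def distrib_left sum.distrib)

lemma ipZ_diff: "ipZ \<nu> w (\<lambda>k. m k - n k) = ipZ \<nu> w m - ipZ \<nu> w n"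
  by (simp add: ipZ_def right_diff_distrib sum_subtractf)

lemma ipZ_unitv:
  assumes "j \<in> {1..\<nu>}"
  shows "ipZ \<nu> w (unitv j) = w j"
  using assms by (simp add: ipZ_def unitv_def if_distrib sum.delta cong: if_cong)

lemma half_omega0:
  assumes "0 < Fp" "0 < real j * \<gamma>" "real j * \<gamma> < 2 * sqrt Fp"
  shows "0 < omega0 Fp \<gamma> j / 2" "omega0 Fp \<gamma> j / 2 < pi / 2"
    and "sin (omega0 Fp \<gamma> j / 2) = real j * \<gamma> / (2 * sqrt Fp)"
proof -
  define x where "x = real j * \<gamma> / (2 * sqrt Fp)"
  have x: "0 < x" "x < 1" using assms by (simp_all add: x_def)
  have half: "omega0 Fp \<gamma> j / 2 = arcsin x" by (simp add: omega0_def x_def)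
  show "0 < omega0 Fp \<gamma> j / 2" using x arcsin_less_mono[of 0 x] by (simp add: half)
  show "omega0 Fp \<gamma> j / 2 < pi / 2" using x arcsin_lt_bounded[of x] by (simp add: half)
  show "sin (omega0 Fp \<gamma> j / 2) = x" using x by (simp add: half)
qed

lemma Lambda_pos:
  assumes "0 < Fp" "0 < real j * \<gamma>" "real j * \<gamma> < 2 * sqrt Fp"
  shows "0 < Lambda Fp \<gamma> j"
proof -
  note a = half_omega0[OF assms]
  have "0 < cos (omega0 Fp \<gamma> j / 2)" using a by (intro cos_gt_zero)
  moreover have "0 < sin (omega0 Fp \<gamma> j / 2)" using a assms by simp
  moreover have "0 < (real j * \<gamma>)\<^sup>2" using assms(2) by (intro zero_less_power)
  ultimately show ?thesis unfolding Lambda_def by (intro divide_pos_pos mult_pos_pos) auto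
qed

lemma Vfun_eq_nonzero_real:
  assumes "0 < Fp" "ipZ \<nu> gvec m \<noteq> 0" "ipZ \<nu> gvec m * \<gamma> = 2 * sqrt Fp * d"
    and "ipZ \<nu> w m = 2 * t" "sin t \<noteq> 0" "\<bar>sin t\<bar> \<noteq> \<bar>d\<bar>"
  shows "\<exists>r. r \<noteq> 0 \<and> Vfun Fp \<gamma> \<nu> w m = ereal r"
proof -
  have nonsingular: "\<not> (\<exists>k::int. ipZ \<nu> w m = 2 * pi * real_of_int k)"
    using assms(4,5) by (auto simp: sin_zero_iff_int2 mult.commute)
  have "(ipZ \<nu> gvec m)\<^sup>2 * \<gamma>\<^sup>2 = 4 * Fp * d\<^sup>2"
    using arg_cong[OF assms(3), of "\<lambda>x. x\<^sup>2"] assms(1) by (simp add: power_mult_distrib)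
  then have "Fp - (ipZ \<nu> gvec m)\<^sup>2 * \<gamma>\<^sup>2 / (4 * (sin t)\<^sup>2) = Fp * ((sin t)\<^sup>2 - d\<^sup>2) / (sin t)\<^sup>2"
    using assms(5) by (simp add: field_simps)
  moreover have "(sin t)\<^sup>2 \<noteq> d\<^sup>2" using assms(6) by (metis real_sqrt_abs)
  ultimately show ?thesis
    using assms nonsingular by (simp add: Vfun_def)
qed

theorem lemma11:
  fixes F :: "real \<Rightarrow> real" and b \<gamma> :: real and \<nu> :: nat
  assumes A1: "real_analytic_at F (-b)" and Fpos: "deriv F (-b) > 0"
    and A2: "0 < \<gamma>" "\<gamma> < sqrt (deriv F (-b))"
    and nonres: "\<forall>k::int. 2 * sqrt (deriv F (-b)) \<noteq> \<gamma> * real_of_int k"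
    and nu: "real \<nu> * \<gamma> < 2 * sqrt (deriv F (-b))"
            "2 * sqrt (deriv F (-b)) < (real \<nu> + 1) * \<gamma>"
  shows "(\<forall>j\<in>{1..\<nu>}. Lambda (deriv F (-b)) \<gamma> j \<noteq> 0)
       \<and> (\<forall>j\<in>{1..\<nu>}. \<forall>l\<in>{1..\<nu>}. \<exists>r::real. r \<noteq> 0 \<and>
            Vfun (deriv F (-b)) \<gamma> \<nu> (omega0 (deriv F (-b)) \<gamma>) (\<lambda>k. unitv j k + unitv l k) = ereal r)
       \<and> (\<forall>j\<in>{1..\<nu>}. \<forall>l\<in>{1..\<nu>}. j \<noteq> l \<longrightarrow> (\<exists>r::real. r \<noteq> 0 \<and>
            Vfun (deriv F (-b)) \<gamma> \<nu> (omega0 (deriv F (-b)) \<gamma>) (\<lambda>k. unitv j k - unitv l k) = ereal r))"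
proof -
  define Fp where "Fp = deriv F (-b)"
  define a where "a j = omega0 Fp \<gamma> j / 2" for j
  have range: "0 < real j * \<gamma>" "real j * \<gamma> < 2 * sqrt Fp" if "j \<in> {1..\<nu>}" for j
  proof -
    show "0 < real j * \<gamma>" using that A2(1) by simp
    have "real j * \<gamma> \<le> real \<nu> * \<gamma>" using that A2(1) by (simp add: mult_right_mono)
    then show "real j * \<gamma> < 2 * sqrt Fp" using nu(1) by (simp add: Fp_def)
  qed
  note half = half_omega0[OF Fpos[folded Fp_def] range, folded a_def]
  have sum: "\<exists>r. r \<noteq> 0 \<and> Vfun Fp \<gamma> \<nu> (omega0 Fp \<gamma>) (\<lambda>k. unitv j k + unitv l k) = ereal r"
    if "j \<in> {1..\<nu>}" "l \<in> {1..\<nu>}" for j l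
    using that half[OF that(1)] half[OF that(2)] sin_add_less_sin_plus_sin[of "a j" "a l"] Fpos A2(1)
    by (intro Vfun_eq_nonzero_real[where d = "sin (a j) + sin (a l)" and t = "a j + a l"])
      (auto simp: Fp_def ipZ_add ipZ_unitv gvec_def a_def field_simps)
  have diff: "\<exists>r. r \<noteq> 0 \<and> Vfun Fp \<gamma> \<nu> (omega0 Fp \<gamma>) (\<lambda>k. unitv j k - unitv l k) = ereal r"
    if "j \<in> {1..\<nu>}" "l \<in> {1..\<nu>}" "j \<noteq> l" for j l
  proof -
    have "a j \<noteq> a l" using that half[OF that(1)] half[OF that(2)] A2(1) Fpos by (auto simp: Fp_def)
    then show ?thesis
      using that half[OF that(1)] half[OF that(2)] abs_sin_minus_sin_less[of "a j" "a l"] Fpos A2(1)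
      by (intro Vfun_eq_nonzero_real[where d = "sin (a j) - sin (a l)" and t = "a j - a l"])
        (auto simp: Fp_def ipZ_diff ipZ_unitv gvec_def a_def field_simps)
  qed
  have "Lambda Fp \<gamma> j \<noteq> 0" if "j \<in> {1..\<nu>}" for j
    using Lambda_pos[OF Fpos[folded Fp_def] range[OF that]] by simp
  then show ?thesis using sum diff by (simp add: Fp_def)
qed

end
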